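(* Let $G_0$ be a connected graph with a vertex $x$ such that $d_{G_0}(x)\in\{1,2\}$. Let $P_1=u_1u_2\cdots u_k$ ($k\ge1$) and $P_2=v_1v_2\cdots v_l$ ($l\ge1$) be paths, vertex-disjoint from each other and from $G_0$. Let $G_1$ be the graph obtained from the disjoint union of $G_0,P_1,P_2$ by adding the edges $u_1x$ and $v_1x$, and let $G_2=G_1-u_1x+u_1v_l$. Then $SO(G_1)>SO(G_2)$ and $SO_{red}(G_1)>SO_{red}(G_2)$.
   Context: $d_G(u)$ denotes the degree of $u$ in $G$. $SO(G)=\sum_{uv\in E(G)}\sqrt{d_G(u)^2+d_G(v)^2}$ and $SO_{red}(G)=\sum_{uv\in E(G)}\sqrt{(d_G(u)-1)^2+(d_G(v)-1)^2}$. *)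

theory Defs
  imports Complex_Main
begin

definition simple_graph :: "'a set \<Rightarrow> 'a set set \<Rightarrow> bool" where
  "simple_graph V E \<longleftrightarrow> finite V \<and> (\<forall>e\<in>E. e \<subseteq> V \<and> card e = 2)"

definition degree :: "'a set set \<Rightarrow> 'a \<Rightarrow> nat" where
  "degree E u = card {e\<in>E. u \<in> e}"

definition connected_graph :: "'a set \<Rightarrow> 'a set set \<Rightarrow> bool" where
  "connected_graph V E \<longleftrightarrow> V \<noteq> {} \<and>
     (\<forall>a\<in>V. \<forall>b\<in>V. \<exists>p::'a list. p \<noteq> [] \<and> hd p = a \<and> last p = b \<and>
        set p \<subseteq> V \<and> (\<forall>i. Suc i < length p \<longrightarrow> {p ! i, p ! Suc i} \<in> E))"

text \<open>Sombor index and reduced Sombor index; for an edge e = {u,v} the sum over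
  w in e of d(w)^2 is d(u)^2 + d(v)^2.\<close>
definition SO :: "'a set set \<Rightarrow> real" where
  "SO E = (\<Sum>e\<in>E. sqrt (\<Sum>w\<in>e. (real (degree E w))\<^sup>2))"

definition SO_red :: "'a set set \<Rightarrow> real" where
  "SO_red E = (\<Sum>e\<in>E. sqrt (\<Sum>w\<in>e. (real (degree E w) - 1)\<^sup>2))"

definition path_edges :: "(nat \<Rightarrow> 'a) \<Rightarrow> nat \<Rightarrow> 'a set set" where
  "path_edges w n = {{w i, w (Suc i)} | i. 1 \<le> i \<and> i < n}"

end

theory Submission
  imports Defs
begin

(* Moving the edge u1 x to u1 vl changes exactly two degrees: x drops from d(x) >= 3 to d(x) - 1
   and the pendant vertex vl rises from 1 to 2.  Both indices have the form
   sum over edges ab of sqrt ((d a - c)^2 + (d b - c)^2), with c = 0 for SO and c = 1 for SO_red,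
   so every edge other than u1 x and the pendant edge at vl keeps or lowers its term.  For these
   two edges the comparison is an elementary inequality in d(u1) in {1, 2} and d(x) >= 3; the
   pendant edge is vl x if l = 1 and vl v(l-1) with d(v(l-1)) = 2 otherwise. *)

lemma finite_path_edges: "finite (path_edges w n)"
proof -
  have "path_edges w n = (\<lambda>i. {w i, w (Suc i)}) ` {1..<n}"
    unfolding path_edges_def by auto
  then show ?thesis by simp
qed

lemma path_edges_subset: "e \<in> path_edges w n \<Longrightarrow> e \<subseteq> w ` {1..n}"
  unfolding path_edges_def by auto

lemma path_edges_nonempty: "e \<in> path_edges w n \<Longrightarrow> e \<noteq> {}"
  unfolding path_edges_def by auto

lemma edge_sets_disjoint:
  assumes "\<And>e. e \<in> A \<Longrightarrow> e \<subseteq> S \<and> e \<noteq> {}" and "\<And>e. e \<in> B \<Longrightarrow> e \<subseteq> T"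
    and "S \<inter> T = {}"
  shows "A \<inter> B = {}"
  using assms by blast

lemma degree_empty [simp]: "degree {} z = 0"
  by (simp add: degree_def)

lemma degree_insert:
  assumes "finite E" "e \<notin> E"
  shows "degree (insert e E) z = degree E z + (if z \<in> e then 1 else 0)"
proof -
  have "{e'\<in>insert e E. z \<in> e'}
      = (if z \<in> e then insert e {e'\<in>E. z \<in> e'} else {e'\<in>E. z \<in> e'})"
    by auto
  then show ?thesis using assms by (simp add: degree_def)
qed

lemma degree_Un_disjoint:
  assumes "finite A" "finite B" "A \<inter> B = {}"
  shows "degree (A \<union> B) z = degree A z + degree B z"
proof -
  have "{e\<in>A \<union> B. z \<in> e} = {e\<in>A. z \<in> e} \<union> {e\<in>B. z \<in> e}" by auto
  then show ?thesis using assms unfolding degree_def by (simp add: card_Un_disjoint disjoint_iff)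
qed

lemma degree_eq_0: "(\<And>e. e \<in> E \<Longrightarrow> z \<notin> e) \<Longrightarrow> degree E z = 0"
  unfolding degree_def by (metis (mono_tags, lifting) card.empty empty_Collect_eq)

lemma degree_ge_1:
  assumes "finite E" "e \<in> E" "z \<in> e"
  shows "degree E z \<ge> 1"
  using assms by (auto simp: degree_def Suc_le_eq card_gt_0_iff)

lemma degree_1_unique_edge:
  assumes "degree E z = 1" "e \<in> E" "z \<in> e" "e' \<in> E" "z \<in> e'"
  shows "e' = e"
  using assms unfolding degree_def
  by (metis (mono_tags, lifting) card_1_singletonE mem_Collect_eq singletonD)

lemma degree_switch_edge:
  assumes "finite E" "e \<in> E" "e' \<notin> E"
  shows "degree ((E - {e}) \<union> {e'}) z
    = degree E z - (if z \<in> e then 1 else 0) + (if z \<in> e' then 1 else 0)"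
proof -
  have "{e''\<in>E - {e}. z \<in> e''} = {e''\<in>E. z \<in> e''} - {e}" by auto
  then have "degree (E - {e}) z = degree E z - (if z \<in> e then 1 else 0)"
    using assms by (simp add: degree_def card_Diff_singleton_if)
  moreover have "(E - {e}) \<union> {e'} = insert e' (E - {e})" by auto
  ultimately show ?thesis using assms by (simp add: degree_insert)
qed

lemma degree_path_edges:
  assumes inj: "inj_on w {1..n}" and m: "m \<in> {1..n}"
  shows "degree (path_edges w n) (w m) = (if 1 < m then 1 else 0) + (if m < n then 1 else 0)"
proof -
  let ?L = "if 1 < m then {{w (m - 1), w m}} else {}"
    and ?R = "if m < n then {{w m, w (Suc m)}} else {}"
  have incident: "{e\<in>path_edges w n. w m \<in> e} = ?L \<union> ?R"
  proof (rule set_eqI)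
    fix e
    have "e \<in> path_edges w n \<and> w m \<in> e \<longleftrightarrow>
        (\<exists>i. 1 \<le> i \<and> i < n \<and> e = {w i, w (Suc i)} \<and> (m = i \<or> m = Suc i))"
      using inj m unfolding path_edges_def by (auto dest: inj_onD)
    also have "\<dots> \<longleftrightarrow> (1 < m \<and> e = {w (m - 1), w m}) \<or> (m < n \<and> e = {w m, w (Suc m)})"
      using m by (cases m) (auto, metis less_eq_Suc_le)
    finally show "e \<in> {e\<in>path_edges w n. w m \<in> e} \<longleftrightarrow> e \<in> ?L \<union> ?R"
      by auto
  qed
  have "?L \<inter> ?R = {}"
  proof (cases "1 < m \<and> m < n")
    case True
    moreover have "m - 1 \<in> {1..n}" "Suc m \<in> {1..n}" using True m by auto
    ultimately have "w (m - 1) \<noteq> w m" "w (m - 1) \<noteq> w (Suc m)"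
      using m by (auto dest: inj_onD[OF inj])
    then show ?thesis by (auto simp: doubleton_eq_iff)
  qed auto
  then have "card (?L \<union> ?R) = card ?L + card ?R"
    by (intro card_Un_disjoint) auto
  then show ?thesis
    unfolding degree_def incident by simp
qed

lemma degree_path_edges_outside: "z \<notin> w ` {1..n} \<Longrightarrow> degree (path_edges w n) z = 0"
  using path_edges_subset by (fastforce intro: degree_eq_0)

definition edge_term :: "real \<Rightarrow> 'a set set \<Rightarrow> 'a set \<Rightarrow> real" where
  "edge_term c E e = sqrt (\<Sum>w\<in>e. (real (degree E w) - c)\<^sup>2)"

definition sombor_index :: "real \<Rightarrow> 'a set set \<Rightarrow> real" where
  "sombor_index c E = (\<Sum>e\<in>E. edge_term c E e)"

lemma SO_eq_sombor_index: "SO E = sombor_index 0 E"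
  by (simp add: SO_def sombor_index_def edge_term_def)

lemma SO_red_eq_sombor_index: "SO_red E = sombor_index 1 E"
  by (simp add: SO_red_def sombor_index_def edge_term_def)

lemma edge_term_mono:
  assumes "c \<le> 1" and "\<And>w. w \<in> e \<Longrightarrow> 1 \<le> degree E' w \<and> degree E' w \<le> degree E w"
  shows "edge_term c E' e \<le> edge_term c E e"
  unfolding edge_term_def
proof (intro real_sqrt_le_mono sum_mono power_mono)
  fix w assume "w \<in> e"
  then show "0 \<le> real (degree E' w) - c" "real (degree E' w) - c \<le> real (degree E w) - c"
    using assms by fastforce+
qed

lemma sombor_index_switch_edge_less:
  fixes c :: real and E E' :: "'a set set" and e e' f :: "'a set"
  assumes E'_def: "E' = (E - {e}) \<union> {e'}"
    and fin: "finite E" and e: "e \<in> E" and e': "e' \<notin> E" and f: "f \<in> E" "f \<noteq> e"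
    and c: "c \<le> 1"
    and untouched: "\<And>g. g \<in> E - {e, f} \<Longrightarrow> g \<inter> e' \<subseteq> e"
    and gain: "edge_term c E' e' + edge_term c E' f < edge_term c E e + edge_term c E f"
  shows "sombor_index c E' < sombor_index c E"
proof -
  have deg': "degree E' z = degree E z - (if z \<in> e then 1 else 0) + (if z \<in> e' then 1 else 0)"
    for z
    unfolding E'_def using fin e e' by (rule degree_switch_edge)
  have rest: "edge_term c E' g \<le> edge_term c E g" if g: "g \<in> E - {e, f}" for g
  proof (rule edge_term_mono[OF c])
    fix w assume "w \<in> g"
    moreover have "g \<in> E'" using g unfolding E'_def by auto
    ultimately show "1 \<le> degree E' w \<and> degree E' w \<le> degree E w"
      using degree_ge_1[of E' g w] degree_ge_1[OF fin e, of w] untouched[OF g] deg'[of w] fin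
      unfolding E'_def by auto
  qed
  have "E - {e} = insert f (E - {e, f})" "e' \<noteq> f" using f e' by auto
  then have split_E': "sum h E' = h e' + h f + sum h (E - {e, f})"
    and split_E: "sum h E = h e + h f + sum h (E - {e, f})" for h :: "'a set \<Rightarrow> real"
    unfolding E'_def using fin e e' f by (simp_all add: sum.remove add.assoc)
  have "sombor_index c E'
      = edge_term c E' e' + edge_term c E' f + (\<Sum>g\<in>E - {e, f}. edge_term c E' g)"
    unfolding sombor_index_def by (rule split_E')
  also have "\<dots> < edge_term c E e + edge_term c E f + (\<Sum>g\<in>E - {e, f}. edge_term c E g)"
    using gain sum_mono[of "E - {e, f}" "edge_term c E'" "edge_term c E"] rest by fastforce
  also have "\<dots> = sombor_index c E"
    unfolding sombor_index_def by (rule split_E[symmetric])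
  finally show ?thesis .
qed

lemma pendant_at_x_gain:
  fixes A D c :: real
  assumes "D \<ge> 3" "c \<le> 2"
  shows "sqrt ((A - c)\<^sup>2 + (2 - c)\<^sup>2) + sqrt ((2 - c)\<^sup>2 + (D - 1 - c)\<^sup>2)
       < sqrt ((A - c)\<^sup>2 + (D - c)\<^sup>2) + sqrt ((1 - c)\<^sup>2 + (D - c)\<^sup>2)"
proof (rule add_strict_mono; rule real_sqrt_less_mono)
  have "(2 - c)\<^sup>2 < (D - c)\<^sup>2" using assms by (intro power_strict_mono) auto
  then show "(A - c)\<^sup>2 + (2 - c)\<^sup>2 < (A - c)\<^sup>2 + (D - c)\<^sup>2" by simp
  show "(2 - c)\<^sup>2 + (D - 1 - c)\<^sup>2 < (1 - c)\<^sup>2 + (D - c)\<^sup>2"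
    using assms by (simp add: power2_eq_square algebra_simps)
qed

lemma twice_sqrt_less_sqrt_add_sqrt:
  fixes a b s :: real
  assumes "0 \<le> a" "0 \<le> b" "0 \<le> s" "4 * s < a + b + 2 * sqrt (a * b)"
  shows "2 * sqrt s < sqrt a + sqrt b"
proof (rule power_less_imp_less_base)
  show "(2 * sqrt s)\<^sup>2 < (sqrt a + sqrt b)\<^sup>2"
    using assms by (simp add: power2_sum power_mult_distrib real_sqrt_mult)
  show "0 \<le> sqrt a + sqrt b" using assms by simp
qed

lemma pendant_at_path_gain:
  fixes A D c :: real
  assumes A: "A = 1 \<or> A = 2" and D: "D \<ge> 3" and c: "c = 0 \<or> c = 1"
  shows "sqrt ((A - c)\<^sup>2 + (2 - c)\<^sup>2) + sqrt ((2 - c)\<^sup>2 + (2 - c)\<^sup>2)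
       < sqrt ((A - c)\<^sup>2 + (D - c)\<^sup>2) + sqrt ((2 - c)\<^sup>2 + (1 - c)\<^sup>2)"
proof -
  have "(3 - c)\<^sup>2 \<le> (D - c)\<^sup>2" using D c by (intro power_mono) auto
  then have "sqrt ((A - c)\<^sup>2 + (3 - c)\<^sup>2) \<le> sqrt ((A - c)\<^sup>2 + (D - c)\<^sup>2)" by simp
  moreover have "sqrt ((A - c)\<^sup>2 + (2 - c)\<^sup>2) + sqrt ((2 - c)\<^sup>2 + (2 - c)\<^sup>2)
       < sqrt ((A - c)\<^sup>2 + (3 - c)\<^sup>2) + sqrt ((2 - c)\<^sup>2 + (1 - c)\<^sup>2)"
  proof -
    have "2 * sqrt 8 < sqrt 13 + sqrt (5 :: real)"
    proof (rule twice_sqrt_less_sqrt_add_sqrt)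
      have "7 < sqrt (13 * 5 :: real)" by (rule real_less_rsqrt) simp
      then show "4 * 8 < 13 + 5 + 2 * sqrt (13 * 5 :: real)" by simp
    qed simp_all
    moreover have "2 * sqrt 2 < sqrt 5 + sqrt (1 :: real)"
    proof (rule twice_sqrt_less_sqrt_add_sqrt)
      have "1 < sqrt (5 * 1 :: real)" by (rule real_less_rsqrt) simp
      then show "4 * 2 < 5 + 1 + 2 * sqrt (5 * 1 :: real)" by simp
    qed simp_all
    moreover have "sqrt 8 < sqrt (10 :: real)" "sqrt 2 < (2 :: real)"
      by (simp, rule real_less_lsqrt) simp_all
    ultimately show ?thesis using A c by (auto simp: power2_eq_square)
  qed
  ultimately show ?thesis by linarith
qed

locale two_pendant_paths =
  fixes V0 :: "'a set" and E0 :: "'a set set" and x :: 'a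
    and u v :: "nat \<Rightarrow> 'a" and k l :: nat and E1 E2 :: "'a set set"
  assumes G0: "simple_graph V0 E0"
    and x: "x \<in> V0" "degree E0 x \<in> {1, 2}"
    and kl: "k \<ge> 1" "l \<ge> 1"
    and inj_u: "inj_on u {1..k}" and inj_v: "inj_on v {1..l}"
    and disj: "u ` {1..k} \<inter> v ` {1..l} = {}"
              "u ` {1..k} \<inter> V0 = {}" "v ` {1..l} \<inter> V0 = {}"
    and E1_def: "E1 = E0 \<union> path_edges u k \<union> path_edges v l \<union> {{u 1, x}, {v 1, x}}"
    and E2_def: "E2 = (E1 - {{u 1, x}}) \<union> {{u 1, v l}}"
begin

lemma E0_subset: "e \<in> E0 \<Longrightarrow> e \<subseteq> V0"
  using G0 by (simp add: simple_graph_def)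

lemma finite_E0: "finite E0"
proof -
  have "E0 \<subseteq> Pow V0" using E0_subset by auto
  then show ?thesis using G0 by (simp add: simple_graph_def finite_subset)
qed

lemma finite_E1: "finite E1"
  unfolding E1_def using finite_E0 by (simp add: finite_path_edges)

lemma separated_vertices:
  "u 1 \<notin> V0" "v 1 \<notin> V0" "v l \<notin> V0" "x \<notin> u ` {1..k}" "x \<notin> v ` {1..l}"
  "u 1 \<notin> v ` {1..l}" "v 1 \<notin> u ` {1..k}" "v l \<notin> u ` {1..k}"
proof -
  have "1 \<in> {1..k}" "1 \<in> {1..l}" "l \<in> {1..l}" using kl by auto
  then show "u 1 \<notin> V0" "v 1 \<notin> V0" "v l \<notin> V0" "x \<notin> u ` {1..k}" "x \<notin> v ` {1..l}"
    "u 1 \<notin> v ` {1..l}" "v 1 \<notin> u ` {1..k}" "v l \<notin> u ` {1..k}"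
    using disj x(1) by blast+
qed

lemma degree_E1:
  "degree E1 z = degree E0 z + degree (path_edges u k) z + degree (path_edges v l) z
     + degree {{u 1, x}, {v 1, x}} z"
proof -
  have path: "e \<in> path_edges w n \<Longrightarrow> e \<subseteq> w ` {1..n} \<and> e \<noteq> {}" for e w n
    using path_edges_subset path_edges_nonempty by blast
  have "path_edges u k \<inter> E0 = {}" "path_edges v l \<inter> E0 = {}" "path_edges u k \<inter> path_edges v l = {}"
    using edge_sets_disjoint[of "path_edges u k" "u ` {1..k}" E0 V0]
      edge_sets_disjoint[of "path_edges v l" "v ` {1..l}" E0 V0]
      edge_sets_disjoint[of "path_edges u k" "u ` {1..k}" "path_edges v l" "v ` {1..l}"]
      path E0_subset path_edges_subset disj by blast+
  then have old: "E0 \<inter> path_edges u k = {}" "(E0 \<union> path_edges u k) \<inter> path_edges v l = {}" by auto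
  have new: "(E0 \<union> path_edges u k \<union> path_edges v l) \<inter> {{u 1, x}, {v 1, x}} = {}"
    using E0_subset path_edges_subset separated_vertices by blast
  note fin = finite_E0 finite_path_edges
  have "degree E1 z
      = degree (E0 \<union> path_edges u k \<union> path_edges v l) z + degree {{u 1, x}, {v 1, x}} z"
    unfolding E1_def by (rule degree_Un_disjoint[OF _ _ new]) (simp_all add: fin)
  also have "degree (E0 \<union> path_edges u k \<union> path_edges v l) z
      = degree (E0 \<union> path_edges u k) z + degree (path_edges v l) z"
    by (rule degree_Un_disjoint[OF _ _ old(2)]) (simp_all add: fin)
  also have "degree (E0 \<union> path_edges u k) z = degree E0 z + degree (path_edges u k) z"
    by (rule degree_Un_disjoint[OF _ _ old(1)]) (simp_all add: fin)
  finally show ?thesis .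
qed

lemma distinct_vertices: "u 1 \<noteq> x" "v 1 \<noteq> x" "v l \<noteq> x" "u 1 \<noteq> v 1" "u 1 \<noteq> v l"
  using separated_vertices x(1) kl by auto

lemma degree_E0_outside: "z \<notin> V0 \<Longrightarrow> degree E0 z = 0"
  using E0_subset by (auto intro: degree_eq_0)

lemma degree_new_edges:
  "degree {{u 1, x}, {v 1, x}} z
    = (if z \<in> {u 1, x} then 1 else 0) + (if z \<in> {v 1, x} then 1 else 0)"
  using distinct_vertices by (simp add: degree_insert doubleton_eq_iff)

lemma degree_E1_x: "degree E1 x = degree E0 x + 2"
  using degree_E1[of x] degree_new_edges[of x] separated_vertices distinct_vertices
  by (simp add: degree_path_edges_outside)

lemma degree_E1_u1: "degree E1 (u 1) = (if 1 < k then 2 else 1)"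
proof -
  have "1 \<in> {1..k}" using kl by simp
  then show ?thesis
    using degree_E1[of "u 1"] degree_new_edges[of "u 1"] degree_path_edges[OF inj_u, of 1]
      separated_vertices distinct_vertices
    by (simp add: degree_E0_outside degree_path_edges_outside)
qed

lemma degree_E1_v_last: "degree E1 (v l) = 1"
proof -
  have "l \<in> {1..l}" "1 \<in> {1..l}" using kl by simp_all
  then have "v l = v 1 \<longleftrightarrow> l = 1" using inj_v by (auto dest: inj_onD)
  then show ?thesis
    using degree_E1[of "v l"] degree_new_edges[of "v l"]
      degree_path_edges[OF inj_v \<open>l \<in> {1..l}\<close>]
      separated_vertices distinct_vertices kl
    by (simp add: degree_E0_outside degree_path_edges_outside)
qed

lemma v_pred_separated:
  assumes "1 < l"
  shows "v (l - 1) \<notin> V0" "v (l - 1) \<notin> u ` {1..k}" "v (l - 1) \<noteq> x" "v (l - 1) \<noteq> u 1"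
    "v (l - 1) \<noteq> v l" "v (l - 1) = v 1 \<longleftrightarrow> l = 2"
proof -
  have j: "l - 1 \<in> {1..l}" "l \<in> {1..l}" "1 \<in> {1..l}" "1 \<in> {1..k}" using assms kl by auto
  have vl: "v (l - 1) \<in> v ` {1..l}" using j(1) by (rule imageI)
  have u1: "u 1 \<in> u ` {1..k}" using j(4) by (rule imageI)
  show "v (l - 1) \<notin> V0" using vl disj(3) by (metis IntI empty_iff)
  then show "v (l - 1) \<noteq> x" using x(1) by blast
  show "v (l - 1) \<notin> u ` {1..k}" using vl disj(1) by (metis IntI empty_iff)
  then show "v (l - 1) \<noteq> u 1" using u1 by metis
  show "v (l - 1) \<noteq> v l" "v (l - 1) = v 1 \<longleftrightarrow> l = 2"
    using inj_on_eq_iff[OF inj_v j(1,2)] inj_on_eq_iff[OF inj_v j(1,3)] assms by auto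
qed

lemma degree_E1_v_pred:
  assumes "1 < l"
  shows "degree E1 (v (l - 1)) = 2"
proof -
  have "l - 1 \<in> {1..l}" "1 < l - 1 \<longleftrightarrow> l \<noteq> 2" using assms by auto
  then show ?thesis
    using degree_E1[of "v (l - 1)"] degree_new_edges[of "v (l - 1)"] degree_path_edges[OF inj_v]
      v_pred_separated[OF assms] assms
    by (simp add: degree_E0_outside degree_path_edges_outside)
qed

definition pendant_edge :: "'a set" where
  "pendant_edge = (if l = 1 then {v 1, x} else {v (l - 1), v l})"

lemma pendant_edge_in_E1: "pendant_edge \<in> E1" "v l \<in> pendant_edge"
proof -
  have "1 < l \<Longrightarrow> {v (l - 1), v (Suc (l - 1))} \<in> path_edges v l"
    unfolding path_edges_def by force
  then show "pendant_edge \<in> E1" "v l \<in> pendant_edge"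
    unfolding pendant_edge_def E1_def using kl by auto
qed

lemma edge_at_v_last: "e \<in> E1 \<Longrightarrow> v l \<in> e \<Longrightarrow> e = pendant_edge"
  using degree_1_unique_edge[OF degree_E1_v_last pendant_edge_in_E1(1,2)] .

lemma moved_edge_notin_E1: "{u 1, v l} \<notin> E1"
proof
  assume "{u 1, v l} \<in> E1"
  then have "{u 1, v l} = pendant_edge" by (rule edge_at_v_last) simp
  moreover have "u 1 \<notin> pendant_edge"
  proof (cases "l = 1")
    case False
    then have "1 < l" using kl by simp
    then show ?thesis
      using False distinct_vertices v_pred_separated unfolding pendant_edge_def by auto
  next
    case True
    then show ?thesis using distinct_vertices unfolding pendant_edge_def by auto
  qed
  ultimately show False by auto
qed

lemma edge_u1x_in_E1: "{u 1, x} \<in> E1"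
  unfolding E1_def by simp

lemma degree_E2:
  "degree E2 z = degree E1 z - (if z \<in> {u 1, x} then 1 else 0) + (if z \<in> {u 1, v l} then 1 else 0)"
  unfolding E2_def using finite_E1 edge_u1x_in_E1 moved_edge_notin_E1 by (rule degree_switch_edge)

lemma move_edge_gain:
  assumes c: "c = 0 \<or> c = 1"
  shows "edge_term c E2 {u 1, v l} + edge_term c E2 pendant_edge
       < edge_term c E1 {u 1, x} + edge_term c E1 pendant_edge"
proof -
  define A D where "A = real (degree E1 (u 1))" and "D = real (degree E1 x)"
  have A: "A = 1 \<or> A = 2" using degree_E1_u1 unfolding A_def by auto
  have D: "D \<ge> 3" using degree_E1_x x(2) unfolding D_def by auto
  have deg2: "degree E2 (u 1) = degree E1 (u 1)" "degree E2 (v l) = 2" "real (degree E2 x) = D - 1"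
    using degree_E2 distinct_vertices degree_E1_u1 degree_E1_v_last D unfolding D_def by auto
  have moved: "edge_term c E2 {u 1, v l} = sqrt ((A - c)\<^sup>2 + (2 - c)\<^sup>2)"
    using deg2 distinct_vertices unfolding edge_term_def A_def by simp
  have removed: "edge_term c E1 {u 1, x} = sqrt ((A - c)\<^sup>2 + (D - c)\<^sup>2)"
    using distinct_vertices unfolding edge_term_def A_def D_def by simp
  show ?thesis
  proof (cases "l = 1")
    case True
    then have "pendant_edge = {v l, x}" unfolding pendant_edge_def by simp
    then have "edge_term c E1 pendant_edge = sqrt ((1 - c)\<^sup>2 + (D - c)\<^sup>2)"
      and "edge_term c E2 pendant_edge = sqrt ((2 - c)\<^sup>2 + (D - 1 - c)\<^sup>2)"
      using deg2 distinct_vertices degree_E1_v_last unfolding edge_term_def D_def by simp_all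
    moreover have "c \<le> 2" using c by auto
    ultimately show ?thesis unfolding moved removed by (simp only: pendant_at_x_gain[OF D])
  next
    case False
    then have l: "1 < l" using kl by simp
    then have "degree E2 (v (l - 1)) = 2" using degree_E2 degree_E1_v_pred v_pred_separated by simp
    moreover have "pendant_edge = {v (l - 1), v l}" using False unfolding pendant_edge_def by simp
    ultimately have "edge_term c E1 pendant_edge = sqrt ((2 - c)\<^sup>2 + (1 - c)\<^sup>2)"
      and "edge_term c E2 pendant_edge = sqrt ((2 - c)\<^sup>2 + (2 - c)\<^sup>2)"
      using deg2 v_pred_separated[OF l] degree_E1_v_last degree_E1_v_pred[OF l]
      unfolding edge_term_def by simp_all
    then show ?thesis unfolding moved removed by (simp only: pendant_at_path_gain[OF A D c])
  qed
qed

lemma sombor_index_E2_less: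
  assumes c: "c = 0 \<or> c = 1"
  shows "sombor_index c E2 < sombor_index c E1"
proof (rule sombor_index_switch_edge_less[OF E2_def finite_E1 edge_u1x_in_E1 moved_edge_notin_E1
      pendant_edge_in_E1(1) _ _ _ move_edge_gain[OF c]])
  show "pendant_edge \<noteq> {u 1, x}" using pendant_edge_in_E1(2) distinct_vertices by auto
  show "c \<le> 1" using c by auto
  show "g \<inter> {u 1, v l} \<subseteq> {u 1, x}" if "g \<in> E1 - {{u 1, x}, pendant_edge}" for g
    using that edge_at_v_last by auto
qed

end

theorem lemma2p3:
  fixes V0 :: "'a set" and E0 :: "'a set set" and x :: 'a
    and u v :: "nat \<Rightarrow> 'a" and k l :: nat
  assumes G0: "simple_graph V0 E0" "connected_graph V0 E0"
    and x: "x \<in> V0" "degree E0 x \<in> {1, 2}"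
    and kl: "k \<ge> 1" "l \<ge> 1"
    and inj_u: "inj_on u {1..k}" and inj_v: "inj_on v {1..l}"
    and disj: "u ` {1..k} \<inter> v ` {1..l} = {}"
              "u ` {1..k} \<inter> V0 = {}" "v ` {1..l} \<inter> V0 = {}"
  defines "E1 \<equiv> E0 \<union> path_edges u k \<union> path_edges v l \<union> {{u 1, x}, {v 1, x}}"
  defines "E2 \<equiv> (E1 - {{u 1, x}}) \<union> {{u 1, v l}}"
  shows "SO E1 > SO E2 \<and> SO_red E1 > SO_red E2"
proof -
  interpret two_pendant_paths V0 E0 x u v k l E1 E2
    using G0(1) x kl inj_u inj_v disj by unfold_locales (simp_all add: E1_def E2_def)
  show ?thesis
    using sombor_index_E2_less[of 0] sombor_index_E2_less[of 1]
    by (simp add: SO_eq_sombor_index SO_red_eq_sombor_index)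
qed

end
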